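(* Let $d\ge 1$ be an integer, $K=d+3$, and let $\overline{\gamma}=(\gamma_1,\dots,\gamma_d)\in\mathbb{R}^d$ satisfy condition (KM). Let $X$ be $\mathbb{R}^2$ with a norm $\|\cdot\|_X$ whose closed unit ball $BX$ is a symmetric convex polygon with $2K$ sides whose $K$ pairwise non-parallel sides have slopes $\gamma_1,\dots,\gamma_d,0,1,\infty$, and write $BX=\bigcap_{k=1}^K\{x:|x\cdot b_k|\le 1\}$ with vectors $b_1,\dots,b_K\in\mathbb{R}^2$. Then for every $\varepsilon>0$ there are constants $C,c>0$ (depending on $\varepsilon$) and arbitrarily large integers $n$ for which there exist sets $A=A(n)\subset B(0,1/2)$ with $|A|=n$ such that $$|(A-A)\cdot b_k|\le C n^{1/2+\varepsilon},\quad k=1,\dots,K$$ (in particular $|\Delta_X(A)|\le C' n^{1/2+\varepsilon}$ for a constant $C'$ independent of $n$), and $$\|x-x'\|_X\ge c\, n^{-1/2-\varepsilon}\quad\text{for all } x,x'\in A,\ x\ne x'.$$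
   Context: Slopes are with respect to the standard coordinates: the slope of a non-degenerate segment on the line $u_1x_1+u_2x_2+u_0=0$ is $-u_1/u_2$ (and $\infty$ if $u_2=0$). For a positive integer $L$ let $\mathcal{L}(L)=\{\overline{l}=(l_1,\dots,l_d)\in\mathbb{Z}^d: 0\le l_k<L\}$. A vector $\overline{\gamma}\in\mathbb{R}^d$ satisfies condition (KM) if for every positive integer $L$ and every $\varepsilon>0$, $\inf|\sum_{\overline{l}\in\mathcal{L}(L)} n_{\overline{l}}\gamma_1^{l_1}\cdots\gamma_d^{l_d}|\cdot(\max_{\overline{l}}|n_{\overline{l}}|)^{(1+\varepsilon)L^d}>0$, the infimum over all nonzero integer vectors $(n_{\overline{l}})_{\overline{l}\in\mathcal{L}(L)}$. $B(x,r)$ is the closed Euclidean ball; $|A|$ is cardinality; $A-A=\{a-a'\}$, $A\cdot v=\{a\cdot v:a\in A\}$; $\Delta_X(A)=\{\|x-x'\|_X:x,x'\in A\}$. The constants are independent of $n$. *)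

theory Defs
  imports "HOL-Analysis.Analysis"
begin

definition lattice_idx :: "nat \<Rightarrow> nat \<Rightarrow> (nat \<Rightarrow> nat) set" where
  "lattice_idx d L = {l. \<forall>k. (k < d \<longrightarrow> l k < L) \<and> (d \<le> k \<longrightarrow> l k = 0)}"

definition KM :: "nat \<Rightarrow> (nat \<Rightarrow> real) \<Rightarrow> bool" where
  "KM d \<gamma> \<longleftrightarrow>
    (\<forall>L::nat. L > 0 \<longrightarrow> (\<forall>\<epsilon>::real. \<epsilon> > 0 \<longrightarrow>
      Inf ((\<lambda>n::(nat \<Rightarrow> nat) \<Rightarrow> int.
              \<bar>\<Sum>l\<in>lattice_idx d L. of_int (n l) * (\<Prod>k<d. \<gamma> k ^ l k)\<bar>
              * real_of_int (Max ((\<lambda>l. \<bar>n l\<bar>) ` lattice_idx d L)) powr ((1 + \<epsilon>) * real L ^ d))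
           ` {n. \<exists>l\<in>lattice_idx d L. n l \<noteq> 0}) > 0))"

definition is_norm :: "(real^2 \<Rightarrow> real) \<Rightarrow> bool" where
  "is_norm N \<longleftrightarrow> (\<forall>x. N x = 0 \<longleftrightarrow> x = 0) \<and> (\<forall>a x. N (a *\<^sub>R x) = \<bar>a\<bar> * N x)
     \<and> (\<forall>x y. N (x + y) \<le> N x + N y)"

text \<open>The line x \<bullet> b = 1, i.e. b1 x1 + b2 x2 - 1 = 0, has slope s (finite) iff b2 \<noteq> 0 and -b1/b2 = s;
  it has slope \<infinity> iff b2 = 0.\<close>
definition has_slope :: "real^2 \<Rightarrow> real \<Rightarrow> bool" where
  "has_slope b s \<longleftrightarrow> b $ 2 \<noteq> 0 \<and> - (b $ 1) / (b $ 2) = s"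

definition has_infinite_slope :: "real^2 \<Rightarrow> bool" where
  "has_infinite_slope b \<longleftrightarrow> b $ 2 = 0 \<and> b $ 1 \<noteq> 0"

definition diff_set :: "(real^2) set \<Rightarrow> (real^2) set" where
  "diff_set A = {a - a' | a a'. a \<in> A \<and> a' \<in> A}"

end

theory Submission
  imports Defs "HOL-Real_Asymp.Real_Asymp"
begin

text \<open>
  Fix L with (L+1)^d \<le> (1+\<epsilon>) L^d and let P be the set of the H^(L^d) digit sums
  \<Sum>_l a_l \<gamma>^l over the exponent vectors l \<in> [0,L)^d, with digits 0 \<le> a_l < H.
  The set A is a scaled copy of P \<times> P, so n = |A| = H^(2 L^d).
  By (KM), distinct elements of P are at least \<kappa> H^(-(1+\<epsilon>) L^d) apart; as two sides of the
  polygon are horizontal and vertical, this separates A in the norm.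
  Pairing a difference of A with b_k gives, up to a constant factor, (q - q') - \<gamma>_k (p - p').
  Multiplication by \<gamma>_k raises one exponent by one, so all these numbers are integer combinations
  of the monomials with exponents in [0,L]^d and coefficients at most 2H; there are at most
  (4H+1)^((L+1)^d) \<le> 5^((L+1)^d) n^(1/2+\<epsilon>) of them.
  Finally, the norm of a vector is one of its K pairings, which bounds the distance set.
\<close>

section \<open>Integer combinations of weights\<close>

definition int_comb :: "('a \<Rightarrow> real) \<Rightarrow> 'a set \<Rightarrow> ('a \<Rightarrow> int) \<Rightarrow> real" where
  "int_comb m J c = (\<Sum>l\<in>J. of_int (c l) * m l)"

definition bounded_int_combs :: "('a \<Rightarrow> real) \<Rightarrow> 'a set \<Rightarrow> int \<Rightarrow> real set" where
  "bounded_int_combs m J M = {int_comb m J c | c. \<forall>l\<in>J. \<bar>c l\<bar> \<le> M}"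

definition digit_sums :: "('a \<Rightarrow> real) \<Rightarrow> 'a set \<Rightarrow> nat \<Rightarrow> real set" where
  "digit_sums m J H = int_comb m J ` (J \<rightarrow>\<^sub>E {0..<int H})"

lemma bounded_int_combs_subset_image:
  "bounded_int_combs m J M \<subseteq> int_comb m J ` (J \<rightarrow>\<^sub>E {-M..M})"
proof
  fix x assume "x \<in> bounded_int_combs m J M"
  then obtain c where c: "x = int_comb m J c" "\<forall>l\<in>J. \<bar>c l\<bar> \<le> M"
    by (auto simp: bounded_int_combs_def)
  have "restrict c J \<in> J \<rightarrow>\<^sub>E {-M..M}" using c(2) by (auto simp: abs_le_iff)
  moreover have "int_comb m J (restrict c J) = x" using c(1) by (simp add: int_comb_def)
  ultimately show "x \<in> int_comb m J ` (J \<rightarrow>\<^sub>E {-M..M})" by force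
qed

lemma finite_bounded_int_combs: "finite J \<Longrightarrow> finite (bounded_int_combs m J M)"
  by (rule finite_subset[OF bounded_int_combs_subset_image]) (simp add: finite_PiE)

lemma card_bounded_int_combs_le:
  assumes "finite J" "M \<ge> 0"
  shows "card (bounded_int_combs m J M) \<le> nat (2 * M + 1) ^ card J"
proof -
  have fin: "finite (J \<rightarrow>\<^sub>E {-M..M})" using assms(1) by (simp add: finite_PiE)
  have "card (bounded_int_combs m J M) \<le> card (int_comb m J ` (J \<rightarrow>\<^sub>E {-M..M}))"
    by (rule card_mono[OF finite_imageI[OF fin] bounded_int_combs_subset_image])
  also have "\<dots> \<le> card (J \<rightarrow>\<^sub>E {-M..M})" by (rule card_image_le[OF fin])
  also have "\<dots> = nat (2 * M + 1) ^ card J" using assms by (simp add: card_PiE)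
  finally show ?thesis .
qed

lemma bounded_int_combs_add:
  assumes "x \<in> bounded_int_combs m J M" "y \<in> bounded_int_combs m J M'"
  shows "x + y \<in> bounded_int_combs m J (M + M')"
proof -
  obtain c c' where c: "x = int_comb m J c" "\<forall>l\<in>J. \<bar>c l\<bar> \<le> M"
    and c': "y = int_comb m J c'" "\<forall>l\<in>J. \<bar>c' l\<bar> \<le> M'"
    using assms by (auto simp: bounded_int_combs_def)
  have "x + y = int_comb m J (\<lambda>l. c l + c' l)"
    using c c' by (simp add: int_comb_def sum.distrib distrib_right)
  moreover have "\<forall>l\<in>J. \<bar>c l + c' l\<bar> \<le> M + M'"
    using c c' by (meson abs_triangle_ineq add_mono order_trans)
  ultimately show ?thesis unfolding bounded_int_combs_def by blast
qed

lemma zero_in_bounded_int_combs: "M \<ge> 0 \<Longrightarrow> 0 \<in> bounded_int_combs m J M"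
  unfolding bounded_int_combs_def int_comb_def by (rule CollectI, rule exI[of _ "\<lambda>_. 0"]) simp

lemma bounded_int_combs_mono:
  assumes "x \<in> bounded_int_combs m I M" "I \<subseteq> J" "finite J" "M \<le> M'" "M' \<ge> 0"
  shows "x \<in> bounded_int_combs m J M'"
proof -
  obtain c where c: "x = int_comb m I c" "\<forall>l\<in>I. \<bar>c l\<bar> \<le> M"
    using assms(1) by (auto simp: bounded_int_combs_def)
  have "x = int_comb m J (\<lambda>l. if l \<in> I then c l else 0)"
    unfolding c int_comb_def by (rule sum.mono_neutral_cong_left[OF assms(3,2)]) auto
  moreover have "\<forall>l\<in>J. \<bar>if l \<in> I then c l else 0\<bar> \<le> M'"
    using c assms(4,5) by auto
  ultimately show ?thesis unfolding bounded_int_combs_def by blast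
qed

lemma mult_bounded_int_combs:
  assumes "inj_on g I" "\<And>l. l \<in> I \<Longrightarrow> m (g l) = t * m l" "x \<in> bounded_int_combs m I M"
  shows "t * x \<in> bounded_int_combs m (g ` I) M"
proof -
  obtain c where c: "x = int_comb m I c" "\<forall>l\<in>I. \<bar>c l\<bar> \<le> M"
    using assms(3) by (auto simp: bounded_int_combs_def)
  let ?c = "\<lambda>l. c (the_inv_into I g l)"
  have "int_comb m (g ` I) ?c = (\<Sum>l\<in>I. of_int (c l) * m (g l))"
    unfolding int_comb_def using assms(1) by (simp add: sum.reindex the_inv_into_f_f)
  also have "\<dots> = t * x"
    unfolding c int_comb_def by (simp add: assms(2) sum_distrib_left mult_ac)
  finally have "t * x = int_comb m (g ` I) ?c" ..
  moreover have "\<forall>l\<in>g ` I. \<bar>?c l\<bar> \<le> M"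
    using c assms(1) by (auto simp: the_inv_into_f_f)
  ultimately show ?thesis unfolding bounded_int_combs_def by blast
qed

lemma finite_digit_sums: "finite J \<Longrightarrow> finite (digit_sums m J H)"
  by (simp add: digit_sums_def finite_PiE)

lemma digit_sums_diff_in_bounded_int_combs:
  assumes "p \<in> digit_sums m J H" "p' \<in> digit_sums m J H"
  shows "p - p' \<in> bounded_int_combs m J (int H)"
proof -
  obtain a a' where a: "a \<in> J \<rightarrow>\<^sub>E {0..<int H}" "p = int_comb m J a"
    and a': "a' \<in> J \<rightarrow>\<^sub>E {0..<int H}" "p' = int_comb m J a'"
    using assms by (auto simp: digit_sums_def)
  have "p - p' = int_comb m J (\<lambda>l. a l - a' l)"
    unfolding a a' int_comb_def by (simp add: sum_subtractf left_diff_distrib)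
  moreover have "\<forall>l\<in>J. \<bar>a l - a' l\<bar> \<le> int H" using a a' by (force simp: PiE_iff)
  ultimately show ?thesis unfolding bounded_int_combs_def by blast
qed

lemma digit_sums_abs_le:
  assumes "p \<in> digit_sums m J H"
  shows "\<bar>p\<bar> \<le> real H * (\<Sum>l\<in>J. \<bar>m l\<bar>)"
proof -
  obtain a where a: "a \<in> J \<rightarrow>\<^sub>E {0..<int H}" "p = int_comb m J a"
    using assms by (auto simp: digit_sums_def)
  have "\<bar>p\<bar> \<le> (\<Sum>l\<in>J. \<bar>of_int (a l) * m l\<bar>)" unfolding a(2) int_comb_def by (rule sum_abs)
  also have "\<dots> \<le> (\<Sum>l\<in>J. real H * \<bar>m l\<bar>)"
  proof (rule sum_mono)
    fix l assume "l \<in> J"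
    then have "\<bar>real_of_int (a l)\<bar> \<le> real H" using a(1) by (force simp: PiE_iff)
    then show "\<bar>of_int (a l) * m l\<bar> \<le> real H * \<bar>m l\<bar>"
      by (simp add: abs_mult mult_right_mono)
  qed
  finally show ?thesis by (simp add: sum_distrib_left)
qed

definition diophantine_bound :: "('a \<Rightarrow> real) \<Rightarrow> 'a set \<Rightarrow> real \<Rightarrow> real \<Rightarrow> bool" where
  "diophantine_bound m J \<kappa> e \<longleftrightarrow> (\<forall>c. (\<exists>l\<in>J. c l \<noteq> 0) \<longrightarrow>
     \<kappa> \<le> \<bar>int_comb m J c\<bar> * of_int (Max ((\<lambda>l. \<bar>c l\<bar>) ` J)) powr e)"

lemma digit_vectors_separation:
  assumes dioph: "diophantine_bound m J \<kappa> e" and "finite J" "e \<ge> 0" "H \<ge> 1"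
    and a: "a \<in> J \<rightarrow>\<^sub>E {0..<int H}" and a': "a' \<in> J \<rightarrow>\<^sub>E {0..<int H}" and "a \<noteq> a'"
  shows "\<kappa> / real H powr e \<le> \<bar>int_comb m J a - int_comb m J a'\<bar>"
proof -
  define c where "c = (\<lambda>l. a l - a' l)"
  obtain l0 where l0: "l0 \<in> J" "c l0 \<noteq> 0"
    using PiE_ext[OF a a'] \<open>a \<noteq> a'\<close> unfolding c_def by auto
  have diff: "int_comb m J c = int_comb m J a - int_comb m J a'"
    unfolding int_comb_def c_def by (simp add: sum_subtractf left_diff_distrib)
  have "\<forall>l\<in>J. \<bar>c l\<bar> \<le> int H" using a a' unfolding c_def by (force simp: PiE_iff)
  then have Max_le: "Max ((\<lambda>l. \<bar>c l\<bar>) ` J) \<le> int H"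
    using \<open>finite J\<close> l0(1) by (subst Max_le_iff) auto
  have "1 \<le> \<bar>c l0\<bar>" using l0(2) by linarith
  also have "\<bar>c l0\<bar> \<le> Max ((\<lambda>l. \<bar>c l\<bar>) ` J)" using \<open>finite J\<close> l0(1) by simp
  finally have "of_int (Max ((\<lambda>l. \<bar>c l\<bar>) ` J)) powr e \<le> real H powr e"
    using Max_le \<open>e \<ge> 0\<close> by (intro powr_mono2) linarith+
  then have "\<kappa> \<le> \<bar>int_comb m J c\<bar> * real H powr e"
    using dioph l0 unfolding diophantine_bound_def
    by (meson abs_ge_zero mult_left_mono order_trans)
  then show ?thesis using \<open>H \<ge> 1\<close> diff by (simp add: divide_le_eq)
qed

lemma card_digit_sums:
  assumes "diophantine_bound m J \<kappa> e" "\<kappa> > 0" "finite J" "e \<ge> 0" "H \<ge> 1"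
  shows "card (digit_sums m J H) = H ^ card J"
proof -
  have "inj_on (int_comb m J) (J \<rightarrow>\<^sub>E {0..<int H})"
  proof (rule inj_onI, rule ccontr)
    fix a a' assume a: "a \<in> J \<rightarrow>\<^sub>E {0..<int H}" "a' \<in> J \<rightarrow>\<^sub>E {0..<int H}" "a \<noteq> a'"
      and eq: "int_comb m J a = int_comb m J a'"
    have "\<kappa> / real H powr e \<le> \<bar>int_comb m J a - int_comb m J a'\<bar>"
      by (rule digit_vectors_separation[OF assms(1,3-5) a])
    moreover have "\<kappa> / real H powr e > 0" using assms(2,5) by simp
    ultimately show False using eq by simp
  qed
  then show ?thesis using assms(3) by (simp add: digit_sums_def card_image card_PiE)
qed

lemma digit_sums_separated:
  assumes "diophantine_bound m J \<kappa> e" "finite J" "e \<ge> 0" "H \<ge> 1"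
    and "p \<in> digit_sums m J H" "p' \<in> digit_sums m J H" "p \<noteq> p'"
  shows "\<kappa> / real H powr e \<le> \<bar>p - p'\<bar>"
  using assms digit_vectors_separation[OF assms(1-4)] unfolding digit_sums_def by blast

section \<open>Monomials in \<gamma>\<close>

lemma lattice_idx_bij_PiE:
  "bij_betw (\<lambda>l. restrict l {..<d}) (lattice_idx d L) ({..<d} \<rightarrow>\<^sub>E {..<L})"
proof (rule bij_betw_byWitness[where f' = "\<lambda>f k. if k < d then f k else 0"])
  show "\<forall>l\<in>lattice_idx d L. (\<lambda>k. if k < d then restrict l {..<d} k else 0) = l"
  proof
    fix l assume "l \<in> lattice_idx d L"
    then show "(\<lambda>k. if k < d then restrict l {..<d} k else 0) = l"
      unfolding lattice_idx_def by (intro ext) auto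
  qed
  show "\<forall>f\<in>{..<d} \<rightarrow>\<^sub>E {..<L}. restrict (\<lambda>k. if k < d then f k else 0) {..<d} = f"
  proof
    fix f assume f: "f \<in> {..<d} \<rightarrow>\<^sub>E {..<L}"
    show "restrict (\<lambda>k. if k < d then f k else 0) {..<d} = f"
    proof (rule ext)
      fix k show "restrict (\<lambda>k. if k < d then f k else 0) {..<d} k = f k"
        using f by (cases "k < d") (auto simp: PiE_def extensional_def)
    qed
  qed
  show "(\<lambda>l. restrict l {..<d}) ` lattice_idx d L \<subseteq> {..<d} \<rightarrow>\<^sub>E {..<L}"
    by (rule image_subsetI) (auto simp: lattice_idx_def)
  show "(\<lambda>f k. if k < d then f k else 0) ` ({..<d} \<rightarrow>\<^sub>E {..<L}) \<subseteq> lattice_idx d L"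
    by (rule image_subsetI) (auto simp: lattice_idx_def PiE_iff)
qed

lemma finite_lattice_idx: "finite (lattice_idx d L)"
  using bij_betw_finite[OF lattice_idx_bij_PiE] by (simp add: finite_PiE)

lemma card_lattice_idx: "card (lattice_idx d L) = L ^ d"
  using bij_betw_same_card[OF lattice_idx_bij_PiE] by (simp add: card_PiE)

lemma lattice_idx_mono: "L \<le> L' \<Longrightarrow> lattice_idx d L \<subseteq> lattice_idx d L'"
  by (auto simp: lattice_idx_def)

lemma lattice_idx_incr_in_Suc:
  assumes "k < d" "l \<in> lattice_idx d L"
  shows "l(k := Suc (l k)) \<in> lattice_idx d (Suc L)"
proof -
  have "j < d \<Longrightarrow> l j < L" "d \<le> j \<Longrightarrow> l j = 0" for j
    using assms(2) by (auto simp: lattice_idx_def)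
  then show ?thesis using assms(1) by (auto simp: lattice_idx_def less_SucI)
qed

definition gamma_monomial :: "nat \<Rightarrow> (nat \<Rightarrow> real) \<Rightarrow> (nat \<Rightarrow> nat) \<Rightarrow> real" where
  "gamma_monomial d \<gamma> l = (\<Prod>k<d. \<gamma> k ^ l k)"

lemma gamma_monomial_incr:
  assumes "k < d"
  shows "gamma_monomial d \<gamma> (l(k := Suc (l k))) = \<gamma> k * gamma_monomial d \<gamma> l"
proof -
  have k: "k \<in> {..<d}" using assms by simp
  have "(\<Prod>j\<in>{..<d} - {k}. \<gamma> j ^ (l(k := Suc (l k))) j) = (\<Prod>j\<in>{..<d} - {k}. \<gamma> j ^ l j)"
    by (rule prod.cong) auto
  then show ?thesis
    unfolding gamma_monomial_def prod.remove[OF finite_lessThan k] by simp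
qed

lemma gamma_mult_bounded_int_combs:
  assumes "k < d" "M \<ge> 0" "x \<in> bounded_int_combs (gamma_monomial d \<gamma>) (lattice_idx d L) M"
  shows "\<gamma> k * x \<in> bounded_int_combs (gamma_monomial d \<gamma>) (lattice_idx d (Suc L)) M"
proof -
  let ?incr = "\<lambda>l::nat \<Rightarrow> nat. l(k := Suc (l k))"
  have "inj_on ?incr (lattice_idx d L)"
  proof (rule inj_onI)
    fix l l' assume eq: "?incr l = ?incr l'"
    show "l = l'"
    proof
      fix j show "l j = l' j" using fun_cong[OF eq, of j] by (cases "j = k") auto
    qed
  qed
  then have "\<gamma> k * x \<in> bounded_int_combs (gamma_monomial d \<gamma>) (?incr ` lattice_idx d L) M"
    using gamma_monomial_incr[OF assms(1)] assms(3) by (rule mult_bounded_int_combs)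
  moreover have "?incr ` lattice_idx d L \<subseteq> lattice_idx d (Suc L)"
    using lattice_idx_incr_in_Suc[OF assms(1)] by blast
  ultimately show ?thesis
    by (rule bounded_int_combs_mono[OF _ _ finite_lattice_idx order_refl assms(2)])
qed

lemma KM_imp_diophantine_bound:
  assumes "KM d \<gamma>" "L > 0" "\<epsilon> > 0"
  shows "\<exists>\<kappa>>0. diophantine_bound (gamma_monomial d \<gamma>) (lattice_idx d L) \<kappa> ((1 + \<epsilon>) * real L ^ d)"
proof -
  let ?f = "\<lambda>c. \<bar>int_comb (gamma_monomial d \<gamma>) (lattice_idx d L) c\<bar>
     * of_int (Max ((\<lambda>l. \<bar>c l\<bar>) ` lattice_idx d L)) powr ((1 + \<epsilon>) * real L ^ d)"
  let ?S = "?f ` {c. \<exists>l\<in>lattice_idx d L. c l \<noteq> 0}"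
  have "Inf ?S > 0"
    using assms unfolding KM_def int_comb_def gamma_monomial_def by blast
  moreover have "Inf ?S \<le> ?f c" if "\<exists>l\<in>lattice_idx d L. c l \<noteq> 0" for c
    using that by (intro cInf_lower bdd_belowI[of _ 0]) auto
  ultimately show ?thesis unfolding diophantine_bound_def by blast
qed

section \<open>Grids in the plane\<close>

lemma inner_real2: "(x :: real^2) \<bullet> y = x $ 1 * y $ 1 + x $ 2 * y $ 2"
  by (simp add: inner_vec_def sum_2)

lemma has_slope_combination:
  "has_slope y s \<Longrightarrow> u * y $ 1 + w * y $ 2 = y $ 2 * (w - s * u)"
  by (auto simp: has_slope_def field_simps)

lemma has_infinite_slope_combination:
  "has_infinite_slope y \<Longrightarrow> u * y $ 1 + w * y $ 2 = y $ 1 * u"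
  by (simp add: has_infinite_slope_def)

definition plane_grid :: "real \<Rightarrow> real set \<Rightarrow> (real^2) set" where
  "plane_grid t P = (\<lambda>(p, q). vector [t * p, t * q]) ` (P \<times> P)"

lemma finite_plane_grid: "finite P \<Longrightarrow> finite (plane_grid t P)"
  by (simp add: plane_grid_def)

lemma card_plane_grid:
  assumes "t \<noteq> 0" "finite P"
  shows "card (plane_grid t P) = card P ^ 2"
proof -
  have "inj_on (\<lambda>(p, q). vector [t * p, t * q] :: real^2) (P \<times> P)"
  proof (rule inj_onI, clarify)
    fix p q p' q' assume "(vector [t * p, t * q] :: real^2) = vector [t * p', t * q']"
    then have "t * p = t * p'" "t * q = t * q'" by (metis vector_2)+
    then show "p = p' \<and> q = q'" using assms(1) by simp
  qed
  then show ?thesis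
    unfolding plane_grid_def by (simp add: card_image card_cartesian_product power2_eq_square)
qed

lemma plane_grid_subset_cball:
  assumes "\<And>p. p \<in> P \<Longrightarrow> \<bar>p\<bar> \<le> R" "t \<ge> 0" "4 * t * R \<le> 1"
  shows "plane_grid t P \<subseteq> cball 0 (1/2)"
proof
  fix x assume "x \<in> plane_grid t P"
  then obtain p q where pq: "p \<in> P" "q \<in> P" "x = vector [t * p, t * q]"
    unfolding plane_grid_def by auto
  have "norm x \<le> \<bar>x $ 1\<bar> + \<bar>x $ 2\<bar>" using norm_le_l1_cart[of x] by (simp add: sum_2)
  also have "\<dots> = t * \<bar>p\<bar> + t * \<bar>q\<bar>" using pq(3) \<open>t \<ge> 0\<close> by (simp add: abs_mult)
  also have "\<dots> \<le> t * R + t * R"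
    using assms(1) pq(1,2) \<open>t \<ge> 0\<close> by (intro add_mono mult_left_mono) auto
  also have "\<dots> \<le> 1/2" using assms(3) by (simp add: algebra_simps)
  finally show "x \<in> cball 0 (1/2)" by simp
qed

lemma card_projection_diff_plane_grid_le:
  assumes "\<And>p p' q q'. p \<in> P \<Longrightarrow> p' \<in> P \<Longrightarrow> q \<in> P \<Longrightarrow> q' \<in> P \<Longrightarrow>
      (p - p') * y $ 1 + (q - q') * y $ 2 \<in> W"
    and "finite W"
  shows "card ((\<lambda>v. v \<bullet> y) ` diff_set (plane_grid t P)) \<le> card W"
proof -
  have "(\<lambda>v. v \<bullet> y) ` diff_set (plane_grid t P) \<subseteq> (\<lambda>z. t * z) ` W"
  proof clarify
    fix v assume "v \<in> diff_set (plane_grid t P)"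
    then obtain p q p' q' where "p \<in> P" "q \<in> P" "p' \<in> P" "q' \<in> P"
      and v: "v = vector [t * p, t * q] - vector [t * p', t * q']"
      unfolding diff_set_def plane_grid_def by auto
    then have "(p - p') * y $ 1 + (q - q') * y $ 2 \<in> W" using assms(1) by blast
    moreover have "v \<bullet> y = t * ((p - p') * y $ 1 + (q - q') * y $ 2)"
      unfolding v inner_real2 by (simp add: algebra_simps)
    ultimately show "v \<bullet> y \<in> (\<lambda>z. t * z) ` W" by blast
  qed
  then have "card ((\<lambda>v. v \<bullet> y) ` diff_set (plane_grid t P)) \<le> card ((\<lambda>z. t * z) ` W)"
    using assms(2) by (intro card_mono) auto
  also have "\<dots> \<le> card W" by (rule card_image_le[OF assms(2)])
  finally show ?thesis .
qed

lemma plane_grid_separated: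
  fixes N :: "real^2 \<Rightarrow> real"
  assumes "\<And>v. \<beta> * \<bar>v $ 1\<bar> \<le> N v" "\<And>v. \<beta> * \<bar>v $ 2\<bar> \<le> N v"
    and "\<And>p p'. p \<in> P \<Longrightarrow> p' \<in> P \<Longrightarrow> p \<noteq> p' \<Longrightarrow> \<delta> \<le> \<bar>p - p'\<bar>"
    and "t \<ge> 0" "\<beta> \<ge> 0"
    and "x \<in> plane_grid t P" "x' \<in> plane_grid t P" "x \<noteq> x'"
  shows "t * \<beta> * \<delta> \<le> N (x - x')"
proof -
  obtain p q p' q' where "p \<in> P" "q \<in> P" "p' \<in> P" "q' \<in> P"
    and x: "x = vector [t * p, t * q]" and x': "x' = vector [t * p', t * q']"
    using assms(6,7) unfolding plane_grid_def by auto
  have tb: "t * \<beta> \<ge> 0" using assms(4,5) by simp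
  show ?thesis
  proof (cases "p = p'")
    case True
    then have "q \<noteq> q'" using assms(8) x x' by auto
    then have "t * \<beta> * \<delta> \<le> t * \<beta> * \<bar>q - q'\<bar>"
      using assms(3) \<open>q \<in> P\<close> \<open>q' \<in> P\<close> tb by (intro mult_left_mono) auto
    also have "\<dots> = \<beta> * \<bar>(x - x') $ 2\<bar>"
      using assms(4) by (simp add: x x' abs_mult right_diff_distrib[symmetric])
    also have "\<dots> \<le> N (x - x')" by (rule assms(2))
    finally show ?thesis .
  next
    case False
    then have "t * \<beta> * \<delta> \<le> t * \<beta> * \<bar>p - p'\<bar>"
      using assms(3) \<open>p \<in> P\<close> \<open>p' \<in> P\<close> tb by (intro mult_left_mono) auto
    also have "\<dots> = \<beta> * \<bar>(x - x') $ 1\<bar>"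
      using assms(4) by (simp add: x x' abs_mult right_diff_distrib[symmetric])
    also have "\<dots> \<le> N (x - x')" by (rule assms(1))
    finally show ?thesis .
  qed
qed

section \<open>Polygonal norms\<close>

lemma is_norm_zero: "is_norm N \<Longrightarrow> N 0 = 0"
  by (simp add: is_norm_def)

lemma is_norm_nonneg: "is_norm N \<Longrightarrow> 0 \<le> N v"
proof -
  assume N: "is_norm N"
  have "N (v + (-1) *\<^sub>R v) \<le> N v + N ((-1) *\<^sub>R v)" using N unfolding is_norm_def by blast
  moreover have "N ((-1) *\<^sub>R v) = \<bar>-1\<bar> * N v" using N unfolding is_norm_def by blast
  ultimately show "0 \<le> N v" using is_norm_zero[OF N] by simp
qed

lemma polygon_norm_ge_abs_inner:
  fixes b :: "nat \<Rightarrow> real^2"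
  assumes N: "is_norm N" and ball: "{x. N x \<le> 1} = {x. \<forall>k < K. \<bar>x \<bullet> b k\<bar> \<le> 1}" and "k < K"
  shows "\<bar>v \<bullet> b k\<bar> \<le> N v"
proof (cases "v = 0")
  case True
  then show ?thesis using is_norm_zero[OF N] by simp
next
  case False
  then have pos: "N v > 0" using N is_norm_nonneg[OF N, of v] by (auto simp: is_norm_def)
  then have "N ((1 / N v) *\<^sub>R v) \<le> 1" using N by (simp add: is_norm_def)
  then have "\<bar>((1 / N v) *\<^sub>R v) \<bullet> b k\<bar> \<le> 1" using ball \<open>k < K\<close> by blast
  then show ?thesis using pos by (simp add: abs_mult divide_le_eq)
qed

lemma polygon_norm_attained:
  fixes b :: "nat \<Rightarrow> real^2"
  assumes N: "is_norm N" and ball: "{x. N x \<le> 1} = {x. \<forall>k < K. \<bar>x \<bullet> b k\<bar> \<le> 1}" and "K > 0"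
  shows "\<exists>k<K. N v = \<bar>v \<bullet> b k\<bar>"
proof -
  define m where "m = Max ((\<lambda>k. \<bar>v \<bullet> b k\<bar>) ` {..<K})"
  have "m \<in> (\<lambda>k. \<bar>v \<bullet> b k\<bar>) ` {..<K}"
    unfolding m_def using \<open>K > 0\<close> by (intro Max_in) auto
  then obtain k0 where k0: "k0 < K" "m = \<bar>v \<bullet> b k0\<bar>" by auto
  have le_m: "\<bar>v \<bullet> b k\<bar> \<le> m" if "k < K" for k unfolding m_def using that by simp
  have "N v \<le> m"
  proof (rule ccontr)
    assume "\<not> N v \<le> m"
    \<comment> \<open>then s v has norm greater than 1 but satisfies all the constraints defining the ball\<close>
    define s where "s = 2 / (N v + m)"
    have "0 \<le> m" using k0 by simp
    then have s: "s > 0" "s * m \<le> 1" "1 < s * N v"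
      using \<open>\<not> N v \<le> m\<close> unfolding s_def by (auto simp: field_simps)
    have "\<bar>(s *\<^sub>R v) \<bullet> b k\<bar> \<le> 1" if "k < K" for k
    proof -
      have "\<bar>(s *\<^sub>R v) \<bullet> b k\<bar> = s * \<bar>v \<bullet> b k\<bar>" using s(1) by (simp add: abs_mult)
      also have "\<dots> \<le> s * m" using le_m[OF that] s(1) by (simp add: mult_left_mono)
      finally show ?thesis using s(2) by simp
    qed
    then have "N (s *\<^sub>R v) \<le> 1" using ball by blast
    then show False using N s(1,3) by (simp add: is_norm_def)
  qed
  then show ?thesis using k0 polygon_norm_ge_abs_inner[OF N ball k0(1), of v] by auto
qed

lemma finite_diff_set: "finite A \<Longrightarrow> finite (diff_set A)"
proof -
  assume "finite A"
  have "diff_set A = (\<lambda>(a, a'). a - a') ` (A \<times> A)" unfolding diff_set_def by auto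
  then show ?thesis using \<open>finite A\<close> by simp
qed

lemma card_polygon_distances_le:
  fixes b :: "nat \<Rightarrow> real^2"
  assumes N: "is_norm N" and ball: "{x. N x \<le> 1} = {x. \<forall>k < K. \<bar>x \<bullet> b k\<bar> \<le> 1}"
    and "K > 0" "finite A"
  shows "card {N (x - x') | x x'. x \<in> A \<and> x' \<in> A}
    \<le> (\<Sum>k<K. card ((\<lambda>v. v \<bullet> b k) ` diff_set A))"
proof -
  let ?proj = "\<lambda>k. (\<lambda>v. v \<bullet> b k) ` diff_set A"
  have fin: "finite (?proj k)" for k using finite_diff_set[OF \<open>finite A\<close>] by simp
  have "{N (x - x') | x x'. x \<in> A \<and> x' \<in> A} \<subseteq> (\<Union>k<K. abs ` ?proj k)"
  proof clarify
    fix x x' assume "x \<in> A" "x' \<in> A"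
    then have "x - x' \<in> diff_set A" unfolding diff_set_def by blast
    moreover obtain k where "k < K" "N (x - x') = \<bar>(x - x') \<bullet> b k\<bar>"
      using polygon_norm_attained[OF N ball \<open>K > 0\<close>] by blast
    ultimately show "N (x - x') \<in> (\<Union>k<K. abs ` ?proj k)" by blast
  qed
  then have "card {N (x - x') | x x'. x \<in> A \<and> x' \<in> A} \<le> card (\<Union>k<K. abs ` ?proj k)"
    using finite_diff_set[OF \<open>finite A\<close>] by (intro card_mono finite_UN_I finite_imageI) auto
  also have "\<dots> \<le> (\<Sum>k<K. card (abs ` ?proj k))" by (rule card_UN_le) simp
  also have "\<dots> \<le> (\<Sum>k<K. card (?proj k))" by (intro sum_mono card_image_le fin)
  finally show ?thesis .
qed

lemma polygon_norm_ge_coords: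
  fixes b :: "nat \<Rightarrow> real^2"
  assumes N: "is_norm N" and ball: "{x. N x \<le> 1} = {x. \<forall>k < K. \<bar>x \<bullet> b k\<bar> \<le> 1}"
    and "i < K" "has_slope (b i) 0" and "j < K" "has_infinite_slope (b j)"
  obtains \<beta> where "\<beta> > 0" "\<And>v. \<beta> * \<bar>v $ 1\<bar> \<le> N v" "\<And>v. \<beta> * \<bar>v $ 2\<bar> \<le> N v"
proof
  let ?\<beta> = "min \<bar>b i $ 2\<bar> \<bar>b j $ 1\<bar>"
  show "?\<beta> > 0" using assms(4,6) unfolding has_slope_def has_infinite_slope_def by simp
  fix v :: "real^2"
  have "?\<beta> * \<bar>v $ 1\<bar> \<le> \<bar>b j $ 1 * v $ 1\<bar>" by (simp add: abs_mult mult_right_mono)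
  also have "b j $ 1 * v $ 1 = v \<bullet> b j"
    using has_infinite_slope_combination[OF assms(6)] by (simp add: inner_real2 mult.commute)
  finally show "?\<beta> * \<bar>v $ 1\<bar> \<le> N v"
    using polygon_norm_ge_abs_inner[OF N ball \<open>j < K\<close>, of v] by linarith
  have "?\<beta> * \<bar>v $ 2\<bar> \<le> \<bar>b i $ 2 * v $ 2\<bar>" by (simp add: abs_mult mult_right_mono)
  also have "b i $ 2 * v $ 2 = v \<bullet> b i"
    using has_slope_combination[OF assms(4)] by (simp add: inner_real2 mult.commute)
  finally show "?\<beta> * \<bar>v $ 2\<bar> \<le> N v"
    using polygon_norm_ge_abs_inner[OF N ball \<open>i < K\<close>, of v] by linarith
qed

section \<open>The construction\<close>

lemma card_projection_slope_le:
  assumes "has_slope y s" "I \<subseteq> J" "finite J"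
    and mult: "\<And>u. u \<in> bounded_int_combs m I (int H) \<Longrightarrow> s * u \<in> bounded_int_combs m J (int H)"
  shows "card ((\<lambda>v. v \<bullet> y) ` diff_set (plane_grid t (digit_sums m I H))) \<le> (4 * H + 1) ^ card J"
proof -
  let ?W = "(\<lambda>z. y $ 2 * z) ` bounded_int_combs m J (2 * int H)"
  have "(p - p') * y $ 1 + (q - q') * y $ 2 \<in> ?W"
    if "p \<in> digit_sums m I H" "p' \<in> digit_sums m I H" "q \<in> digit_sums m I H" "q' \<in> digit_sums m I H"
    for p p' q q'
  proof -
    have "q - q' \<in> bounded_int_combs m J (int H)"
      using digit_sums_diff_in_bounded_int_combs[OF that(3,4)] assms(2,3)
      by (rule bounded_int_combs_mono) simp_all
    moreover have "s * (p' - p) \<in> bounded_int_combs m J (int H)"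
      using digit_sums_diff_in_bounded_int_combs[OF that(2,1)] by (rule mult)
    ultimately have "(q - q') + s * (p' - p) \<in> bounded_int_combs m J (2 * int H)"
      using bounded_int_combs_add by fastforce
    moreover have "(p - p') * y $ 1 + (q - q') * y $ 2 = y $ 2 * ((q - q') + s * (p' - p))"
      using has_slope_combination[OF assms(1)] by (simp add: algebra_simps)
    ultimately show ?thesis by blast
  qed
  then have "card ((\<lambda>v. v \<bullet> y) ` diff_set (plane_grid t (digit_sums m I H))) \<le> card ?W"
    using finite_bounded_int_combs[OF assms(3)] by (intro card_projection_diff_plane_grid_le) auto
  also have "\<dots> \<le> card (bounded_int_combs m J (2 * int H))"
    using finite_bounded_int_combs[OF assms(3)] by (rule card_image_le)
  also have "\<dots> \<le> nat (2 * (2 * int H) + 1) ^ card J"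
    using assms(3) by (rule card_bounded_int_combs_le) simp
  finally show ?thesis by (simp add: nat_add_distrib nat_mult_distrib)
qed

lemma card_projection_infinite_slope_le:
  assumes "has_infinite_slope y" "I \<subseteq> J" "finite J"
  shows "card ((\<lambda>v. v \<bullet> y) ` diff_set (plane_grid t (digit_sums m I H))) \<le> (4 * H + 1) ^ card J"
proof -
  let ?W = "(\<lambda>z. y $ 1 * z) ` bounded_int_combs m J (2 * int H)"
  have "(p - p') * y $ 1 + (q - q') * y $ 2 \<in> ?W"
    if "p \<in> digit_sums m I H" "p' \<in> digit_sums m I H" for p p' q q'
  proof -
    have "p - p' \<in> bounded_int_combs m J (2 * int H)"
      using digit_sums_diff_in_bounded_int_combs[OF that] assms(2,3)
      by (rule bounded_int_combs_mono) simp_all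
    moreover have "(p - p') * y $ 1 + (q - q') * y $ 2 = y $ 1 * (p - p')"
      by (rule has_infinite_slope_combination[OF assms(1)])
    ultimately show ?thesis by blast
  qed
  then have "card ((\<lambda>v. v \<bullet> y) ` diff_set (plane_grid t (digit_sums m I H))) \<le> card ?W"
    using finite_bounded_int_combs[OF assms(3)] by (intro card_projection_diff_plane_grid_le) auto
  also have "\<dots> \<le> card (bounded_int_combs m J (2 * int H))"
    using finite_bounded_int_combs[OF assms(3)] by (rule card_image_le)
  also have "\<dots> \<le> nat (2 * (2 * int H) + 1) ^ card J"
    using assms(3) by (rule card_bounded_int_combs_le) simp
  finally show ?thesis by (simp add: nat_add_distrib nat_mult_distrib)
qed

lemma card_projection_gamma_grid_le:
  fixes b :: "nat \<Rightarrow> real^2"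
  assumes slope_gamma: "\<forall>k < d. has_slope (b k) (\<gamma> k)"
    and slope0: "has_slope (b d) 0" and slope1: "has_slope (b (d + 1)) 1"
    and slope_inf: "has_infinite_slope (b (d + 2))" and "k < d + 3"
  shows "card ((\<lambda>v. v \<bullet> b k) ` diff_set (plane_grid t (digit_sums (gamma_monomial d \<gamma>) (lattice_idx d L) H)))
    \<le> (4 * H + 1) ^ (Suc L ^ d)"
proof -
  let ?I = "lattice_idx d L" and ?J = "lattice_idx d (Suc L)"
  have IJ: "?I \<subseteq> ?J" by (rule lattice_idx_mono) simp
  note card_slope = card_projection_slope_le[OF _ IJ finite_lattice_idx]
  have "k < d \<or> k = d \<or> k = d + 1 \<or> k = d + 2" using \<open>k < d + 3\<close> by linarith
  then have "card ((\<lambda>v. v \<bullet> b k) ` diff_set (plane_grid t (digit_sums (gamma_monomial d \<gamma>) ?I H)))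
    \<le> (4 * H + 1) ^ card ?J"
  proof (elim disjE)
    assume "k < d"
    then show ?thesis
      using slope_gamma gamma_mult_bounded_int_combs[OF \<open>k < d\<close>] by (intro card_slope) auto
  next
    assume "k = d"
    then show ?thesis
      using slope0 zero_in_bounded_int_combs[of "int H"] by (intro card_slope) auto
  next
    assume "k = d + 1"
    then show ?thesis
      using slope1 bounded_int_combs_mono[OF _ IJ finite_lattice_idx order_refl] by (intro card_slope) auto
  next
    assume "k = d + 2"
    then show ?thesis
      using slope_inf by (intro card_projection_infinite_slope_le[OF _ IJ finite_lattice_idx]) simp
  qed
  then show ?thesis by (simp add: card_lattice_idx)
qed

lemma separated_gamma_grids:
  fixes N :: "real^2 \<Rightarrow> real" and b :: "nat \<Rightarrow> real^2"
  assumes N: "is_norm N" and ball: "{x. N x \<le> 1} = {x. \<forall>k < d + 3. \<bar>x \<bullet> b k\<bar> \<le> 1}"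
    and slope_gamma: "\<forall>k < d. has_slope (b k) (\<gamma> k)"
    and slope0: "has_slope (b d) 0" and slope1: "has_slope (b (d + 1)) 1"
    and slope_inf: "has_infinite_slope (b (d + 2))"
    and dioph: "diophantine_bound (gamma_monomial d \<gamma>) (lattice_idx d L) \<kappa> e" and "\<kappa> > 0" "e \<ge> 0"
  shows "\<exists>c>0. \<forall>H\<ge>1. \<exists>A. A \<subseteq> cball 0 (1/2) \<and> finite A \<and> card A = H ^ (2 * L ^ d)
    \<and> (\<forall>k < d + 3. card ((\<lambda>v. v \<bullet> b k) ` diff_set A) \<le> (4 * H + 1) ^ (Suc L ^ d))
    \<and> (\<forall>x\<in>A. \<forall>x'\<in>A. x \<noteq> x' \<longrightarrow> c / (real H * real H powr e) \<le> N (x - x'))"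
    (is "\<exists>c>0. \<forall>H\<ge>1. \<exists>A. ?good c H A")
proof -
  let ?m = "gamma_monomial d \<gamma>" and ?I = "lattice_idx d L"
  define G where "G = (\<Sum>l\<in>?I. \<bar>?m l\<bar>)"
  have "G \<ge> 0" unfolding G_def by (simp add: sum_nonneg)
  obtain \<beta> where "\<beta> > 0" and \<beta>_fst: "\<And>v. \<beta> * \<bar>v $ 1\<bar> \<le> N v" and \<beta>_snd: "\<And>v. \<beta> * \<bar>v $ 2\<bar> \<le> N v"
    by (rule polygon_norm_ge_coords[OF N ball _ slope0 _ slope_inf]) simp_all
  define c where "c = \<beta> * \<kappa> / (4 * (G + 1))"
  have good: "?good c H (plane_grid t (digit_sums ?m ?I H))"
    if "H \<ge> 1" and t: "t = 1 / (4 * real H * (G + 1))" for H t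
  proof (intro conjI allI impI ballI)
    let ?P = "digit_sums ?m ?I H"
    have "t > 0" using \<open>H \<ge> 1\<close> \<open>G \<ge> 0\<close> unfolding t by simp
    have "finite ?P" by (rule finite_digit_sums[OF finite_lattice_idx])
    have "4 * t * (real H * G) = G / (G + 1)"
      using \<open>H \<ge> 1\<close> \<open>G \<ge> 0\<close> unfolding t by (simp add: divide_simps)
    also have "\<dots> \<le> 1" using \<open>G \<ge> 0\<close> by simp
    finally show "plane_grid t ?P \<subseteq> cball 0 (1/2)"
      using \<open>t > 0\<close> by (intro plane_grid_subset_cball[where R = "real H * G"])
        (auto simp: G_def digit_sums_abs_le)
    show "finite (plane_grid t ?P)" using \<open>finite ?P\<close> by (rule finite_plane_grid)
    show "card (plane_grid t ?P) = H ^ (2 * L ^ d)"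
      using card_digit_sums[OF dioph \<open>\<kappa> > 0\<close> finite_lattice_idx \<open>e \<ge> 0\<close> \<open>H \<ge> 1\<close>]
        card_plane_grid[OF _ \<open>finite ?P\<close>, of t] \<open>t > 0\<close>
      by (simp add: card_lattice_idx mult.commute[of 2] power_mult)
    show "card ((\<lambda>v. v \<bullet> b k) ` diff_set (plane_grid t ?P)) \<le> (4 * H + 1) ^ (Suc L ^ d)"
      if "k < d + 3" for k
      using slope_gamma slope0 slope1 slope_inf that by (rule card_projection_gamma_grid_le)
    fix x x' assume "x \<in> plane_grid t ?P" "x' \<in> plane_grid t ?P" "x \<noteq> x'"
    with digit_sums_separated[OF dioph finite_lattice_idx \<open>e \<ge> 0\<close> \<open>H \<ge> 1\<close>]
    have "t * \<beta> * (\<kappa> / real H powr e) \<le> N (x - x')"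
      using \<open>t > 0\<close> \<open>\<beta> > 0\<close> by (intro plane_grid_separated[OF \<beta>_fst \<beta>_snd]) auto
    also have "t * \<beta> * (\<kappa> / real H powr e) = c / (real H * real H powr e)"
      unfolding t c_def by (simp add: field_simps)
    finally show "c / (real H * real H powr e) \<le> N (x - x')" .
  qed
  show ?thesis
  proof (intro exI[of _ c] conjI allI impI)
    show "c > 0" unfolding c_def using \<open>\<beta> > 0\<close> \<open>\<kappa> > 0\<close> \<open>G \<ge> 0\<close> by simp
    fix H :: nat assume "H \<ge> 1"
    show "\<exists>A. ?good c H A" by (rule exI, rule good[OF \<open>H \<ge> 1\<close> refl])
  qed
qed

lemma eventually_lattice_size:
  assumes "\<epsilon> > 0" "d \<ge> 1"
  shows "\<forall>\<^sub>F L in sequentially. L > 0 \<and> 1 \<le> \<epsilon> * real L ^ d \<and> real (Suc L) ^ d \<le> (1 + \<epsilon>) * real L ^ d"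
proof -
  have "((\<lambda>L. real (Suc L) / real L) \<longlongrightarrow> 1) sequentially" by real_asymp
  then have "((\<lambda>L. (real (Suc L) / real L) ^ d) \<longlongrightarrow> 1) sequentially"
    using tendsto_power by fastforce
  then have "\<forall>\<^sub>F L in sequentially. (real (Suc L) / real L) ^ d < 1 + \<epsilon>"
    using \<open>\<epsilon> > 0\<close> by (intro order_tendstoD(2)) auto
  moreover have "\<forall>\<^sub>F L in sequentially. real L \<ge> max 1 (1 / \<epsilon>)" by real_asymp
  ultimately show ?thesis
  proof eventually_elim
    case (elim L)
    then have "L > 0" by simp
    have "1 \<le> \<epsilon> * real L" using elim(2) \<open>\<epsilon> > 0\<close> by (simp add: field_simps)
    also have "real L \<le> real L ^ d"
      using \<open>d \<ge> 1\<close> elim(2) by (metis max.bounded_iff power_increasing power_one_right)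
    finally have "1 \<le> \<epsilon> * real L ^ d" using \<open>\<epsilon> > 0\<close> by simp
    moreover have "real (Suc L) ^ d \<le> (1 + \<epsilon>) * real L ^ d"
      using elim(1) \<open>L > 0\<close> by (simp add: power_divide divide_less_eq)
    ultimately show ?case using \<open>L > 0\<close> by simp
  qed
qed

lemma realpow_powr: "0 < (x :: real) \<Longrightarrow> (x ^ m) powr a = x powr (real m * a)"
  by (simp add: powr_realpow[symmetric] powr_powr)

lemma grid_projection_count_le:
  assumes "H \<ge> 1" "\<epsilon> \<ge> 0" "real K' \<le> (1 + \<epsilon>) * real K"
  shows "real ((4 * H + 1) ^ K') \<le> 5 ^ K' * real (H ^ (2 * K)) powr (1/2 + \<epsilon>)"
proof -
  have "(1 + \<epsilon>) * real K \<le> (1 + 2 * \<epsilon>) * real K"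
    using assms(2) by (intro mult_right_mono) auto
  then have exponent: "real K' \<le> (1 + 2 * \<epsilon>) * real K" using assms(3) by linarith
  have "real ((4 * H + 1) ^ K') \<le> (5 * real H) ^ K'"
    unfolding of_nat_power using assms(1) by (intro power_mono) auto
  also have "\<dots> = 5 ^ K' * real H powr real K'"
    using assms(1) by (simp add: power_mult_distrib powr_realpow)
  also have "real H powr real K' \<le> real H powr ((1 + 2 * \<epsilon>) * real K)"
    using assms(1) exponent by (intro powr_mono) auto
  also have "\<dots> = real (H ^ (2 * K)) powr (1/2 + \<epsilon>)"
    using assms(1) by (simp add: realpow_powr algebra_simps)
  finally show ?thesis by simp
qed

lemma grid_separation_scale_le:
  assumes "H \<ge> 1" "1 \<le> \<epsilon> * real K"
  shows "real (H ^ (2 * K)) powr (- 1/2 - \<epsilon>) \<le> 1 / (real H * real H powr ((1 + \<epsilon>) * real K))"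
proof -
  have "real (H ^ (2 * K)) powr (- 1/2 - \<epsilon>) = real H powr (- ((1 + 2 * \<epsilon>) * real K))"
    using assms(1) by (simp add: realpow_powr algebra_simps)
  also have "\<dots> \<le> real H powr (- (1 + (1 + \<epsilon>) * real K))"
    using assms by (intro powr_mono) (auto simp: algebra_simps)
  also have "\<dots> = 1 / (real H powr 1 * real H powr ((1 + \<epsilon>) * real K))"
    by (simp only: powr_minus_divide powr_add)
  finally show ?thesis using assms(1) by simp
qed

lemma grid_bounds_by_size:
  fixes N :: "real^2 \<Rightarrow> real" and b :: "nat \<Rightarrow> real^2" and K K' :: nat
  assumes norm: "is_norm N" and ball: "{x. N x \<le> 1} = {x. \<forall>k < R. \<bar>x \<bullet> b k\<bar> \<le> 1}" and "R > 0"
    and "\<epsilon> > 0" and K': "real K' \<le> (1 + \<epsilon>) * real K" and K: "1 \<le> \<epsilon> * real K" and "c > 0"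
    and "H \<ge> 1" "finite A" and card_A: "card A = H ^ (2 * K)"
    and proj: "\<forall>k < R. card ((\<lambda>v. v \<bullet> b k) ` diff_set A) \<le> (4 * H + 1) ^ K'"
    and sep: "\<forall>x\<in>A. \<forall>x'\<in>A. x \<noteq> x' \<longrightarrow> c / (real H * real H powr ((1 + \<epsilon>) * real K)) \<le> N (x - x')"
  shows "(\<forall>k < R. real (card ((\<lambda>v. v \<bullet> b k) ` diff_set A)) \<le> 5 ^ K' * real (card A) powr (1/2 + \<epsilon>))
    \<and> real (card {N (x - x') | x x'. x \<in> A \<and> x' \<in> A}) \<le> real R * 5 ^ K' * real (card A) powr (1/2 + \<epsilon>)
    \<and> (\<forall>x\<in>A. \<forall>x'\<in>A. x \<noteq> x' \<longrightarrow> N (x - x') \<ge> c * real (card A) powr (- 1/2 - \<epsilon>))"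
proof (intro conjI)
  have count: "real ((4 * H + 1) ^ K') \<le> 5 ^ K' * real (card A) powr (1/2 + \<epsilon>)"
    using grid_projection_count_le[OF \<open>H \<ge> 1\<close> _ K'] \<open>\<epsilon> > 0\<close> unfolding card_A by simp
  then show "\<forall>k < R. real (card ((\<lambda>v. v \<bullet> b k) ` diff_set A)) \<le> 5 ^ K' * real (card A) powr (1/2 + \<epsilon>)"
    using proj by (meson of_nat_le_iff order_trans)
  have "card {N (x - x') | x x'. x \<in> A \<and> x' \<in> A} \<le> (\<Sum>k<R. card ((\<lambda>v. v \<bullet> b k) ` diff_set A))"
    by (rule card_polygon_distances_le[OF norm ball \<open>R > 0\<close> \<open>finite A\<close>])
  also have "\<dots> \<le> (\<Sum>k<R. (4 * H + 1) ^ K')" using proj by (intro sum_mono) auto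
  also have "\<dots> = R * (4 * H + 1) ^ K'" by simp
  finally have "real (card {N (x - x') | x x'. x \<in> A \<and> x' \<in> A}) \<le> real (R * (4 * H + 1) ^ K')"
    by (rule of_nat_mono)
  also have "\<dots> \<le> real R * 5 ^ K' * real (card A) powr (1/2 + \<epsilon>)"
    using mult_left_mono[OF count, of "real R"] by (simp add: mult.assoc)
  finally show "real (card {N (x - x') | x x'. x \<in> A \<and> x' \<in> A})
      \<le> real R * 5 ^ K' * real (card A) powr (1/2 + \<epsilon>)" .
  have "c * real (card A) powr (- 1/2 - \<epsilon>) \<le> c * (1 / (real H * real H powr ((1 + \<epsilon>) * real K)))"
    using grid_separation_scale_le[OF \<open>H \<ge> 1\<close> K] \<open>c > 0\<close> unfolding card_A
    by (intro mult_left_mono) auto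
  with sep show "\<forall>x\<in>A. \<forall>x'\<in>A. x \<noteq> x' \<longrightarrow> N (x - x') \<ge> c * real (card A) powr (- 1/2 - \<epsilon>)"
    by fastforce
qed

lemma size_bounds_from_grids:
  fixes N :: "real^2 \<Rightarrow> real" and b :: "nat \<Rightarrow> real^2" and K K' :: nat
  assumes norm: "is_norm N" and ball: "{x. N x \<le> 1} = {x. \<forall>k < R. \<bar>x \<bullet> b k\<bar> \<le> 1}" and "R > 0"
    and "\<epsilon> > 0" and K': "real K' \<le> (1 + \<epsilon>) * real K" and K: "1 \<le> \<epsilon> * real K" and "c > 0"
    and grids: "\<forall>H\<ge>1. \<exists>A. A \<subseteq> cball 0 (1/2) \<and> finite A \<and> card A = H ^ (2 * K)
      \<and> (\<forall>k < R. card ((\<lambda>v. v \<bullet> b k) ` diff_set A) \<le> (4 * H + 1) ^ K')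
      \<and> (\<forall>x\<in>A. \<forall>x'\<in>A. x \<noteq> x' \<longrightarrow> c / (real H * real H powr ((1 + \<epsilon>) * real K)) \<le> N (x - x'))"
  shows "\<exists>C c C'. C > 0 \<and> c > 0 \<and> C' > 0 \<and>
      (\<forall>M::nat. \<exists>n::nat. n \<ge> M \<and>
        (\<exists>A :: (real^2) set. A \<subseteq> cball 0 (1/2) \<and> finite A \<and> card A = n
          \<and> (\<forall>k < R. real (card ((\<lambda>v. v \<bullet> b k) ` diff_set A)) \<le> C * real n powr (1/2 + \<epsilon>))
          \<and> real (card {N (x - x') | x x'. x \<in> A \<and> x' \<in> A}) \<le> C' * real n powr (1/2 + \<epsilon>)
          \<and> (\<forall>x\<in>A. \<forall>x'\<in>A. x \<noteq> x' \<longrightarrow> N (x - x') \<ge> c * real n powr (- 1/2 - \<epsilon>))))"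
    (is "\<exists>C c C'. C > 0 \<and> c > 0 \<and> C' > 0 \<and> (\<forall>M. \<exists>n. n \<ge> M \<and> (\<exists>A. ?good C c C' n A))")
proof (rule exI[of _ "5 ^ K'"], rule exI[of _ c], rule exI[of _ "real R * 5 ^ K'"], intro conjI allI)
  show "(5 :: real) ^ K' > 0" "c > 0" "real R * 5 ^ K' > 0" using \<open>c > 0\<close> \<open>R > 0\<close> by simp_all
  fix M :: nat
  have "Suc M \<ge> 1" by simp
  obtain A where A: "A \<subseteq> cball 0 (1/2)" "finite A" "card A = Suc M ^ (2 * K)"
    and proj: "\<forall>k < R. card ((\<lambda>v. v \<bullet> b k) ` diff_set A) \<le> (4 * Suc M + 1) ^ K'"
    and sep: "\<forall>x\<in>A. \<forall>x'\<in>A. x \<noteq> x' \<longrightarrow> c / (real (Suc M) * real (Suc M) powr ((1 + \<epsilon>) * real K)) \<le> N (x - x')"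
    using grids[rule_format, OF \<open>Suc M \<ge> 1\<close>] by (elim exE conjE)
  have "K > 0" using K by (cases K) auto
  then have "M \<le> card A" using self_le_power[of "Suc M" "2 * K"] unfolding A(3) by simp
  moreover have "?good (5 ^ K') c (real R * 5 ^ K') (card A) A"
    using A(1,2) grid_bounds_by_size[OF norm ball \<open>R > 0\<close> \<open>\<epsilon> > 0\<close> K' K \<open>c > 0\<close> \<open>Suc M \<ge> 1\<close> A(2,3) proj sep]
    by simp
  ultimately show "\<exists>n. n \<ge> M \<and> (\<exists>A. ?good (5 ^ K') c (real R * 5 ^ K') n A)" by blast
qed

theorem lemma2p1:
  fixes d :: nat and \<gamma> :: "nat \<Rightarrow> real" and N :: "real^2 \<Rightarrow> real" and b :: "nat \<Rightarrow> real^2"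
  assumes d_pos: "d \<ge> 1"
    and km: "KM d \<gamma>"
    and norm: "is_norm N"
    and ball: "{x. N x \<le> 1} = {x. \<forall>k < d + 3. \<bar>x \<bullet> b k\<bar> \<le> 1}"
    and sides: "\<forall>k < d + 3. \<exists>x y. x \<noteq> y \<and> N x \<le> 1 \<and> N y \<le> 1 \<and> x \<bullet> b k = 1 \<and> y \<bullet> b k = 1"
    and slope_gamma: "\<forall>k < d. has_slope (b k) (\<gamma> k)"
    and slope0: "has_slope (b d) 0"
    and slope1: "has_slope (b (d + 1)) 1"
    and slope_inf: "has_infinite_slope (b (d + 2))"
    and nonpar: "\<forall>i < d + 3. \<forall>j < d + 3. i \<noteq> j \<longrightarrow> \<not> (\<exists>t::real. b i = t *\<^sub>R b j)"
  shows "\<forall>\<epsilon>::real. \<epsilon> > 0 \<longrightarrow>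
    (\<exists>C c C'. C > 0 \<and> c > 0 \<and> C' > 0 \<and>
      (\<forall>M::nat. \<exists>n::nat. n \<ge> M \<and>
        (\<exists>A :: (real^2) set. A \<subseteq> cball 0 (1/2) \<and> finite A \<and> card A = n
          \<and> (\<forall>k < d + 3. real (card ((\<lambda>v. v \<bullet> b k) ` diff_set A)) \<le> C * real n powr (1/2 + \<epsilon>))
          \<and> real (card {N (x - x') | x x'. x \<in> A \<and> x' \<in> A}) \<le> C' * real n powr (1/2 + \<epsilon>)
          \<and> (\<forall>x\<in>A. \<forall>x'\<in>A. x \<noteq> x' \<longrightarrow> N (x - x') \<ge> c * real n powr (- 1/2 - \<epsilon>)))))"
proof (intro allI impI)
  fix \<epsilon> :: real assume "\<epsilon> > 0"
  obtain L where L: "L > 0" "1 \<le> \<epsilon> * real (L ^ d)" "real (Suc L ^ d) \<le> (1 + \<epsilon>) * real (L ^ d)"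
    using eventually_happens'[OF _ eventually_lattice_size[OF \<open>\<epsilon> > 0\<close> d_pos]] by auto
  obtain \<kappa> where "\<kappa> > 0"
    and dioph: "diophantine_bound (gamma_monomial d \<gamma>) (lattice_idx d L) \<kappa> ((1 + \<epsilon>) * real (L ^ d))"
    using KM_imp_diophantine_bound[OF km \<open>L > 0\<close> \<open>\<epsilon> > 0\<close>] by auto
  have "(1 + \<epsilon>) * real (L ^ d) \<ge> 0" using \<open>\<epsilon> > 0\<close> by simp
  from separated_gamma_grids[OF norm ball slope_gamma slope0 slope1 slope_inf dioph \<open>\<kappa> > 0\<close> this]
  show "\<exists>C c C'. C > 0 \<and> c > 0 \<and> C' > 0 \<and>
      (\<forall>M::nat. \<exists>n::nat. n \<ge> M \<and>
        (\<exists>A :: (real^2) set. A \<subseteq> cball 0 (1/2) \<and> finite A \<and> card A = n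
          \<and> (\<forall>k < d + 3. real (card ((\<lambda>v. v \<bullet> b k) ` diff_set A)) \<le> C * real n powr (1/2 + \<epsilon>))
          \<and> real (card {N (x - x') | x x'. x \<in> A \<and> x' \<in> A}) \<le> C' * real n powr (1/2 + \<epsilon>)
          \<and> (\<forall>x\<in>A. \<forall>x'\<in>A. x \<noteq> x' \<longrightarrow> N (x - x') \<ge> c * real n powr (- 1/2 - \<epsilon>))))"
    by (elim exE conjE) (rule size_bounds_from_grids[OF norm ball _ \<open>\<epsilon> > 0\<close> L(3) L(2)]; simp)
qed

end
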